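(* Let $r_2>4$ and let $c$ be an integer with $0<c<\frac{r_2-2}{2}$. Then there is no graph with parameters $(r_2,r_3)$ where $r_3=\binom{r_2-1}{2}+c$.
   Context: All graphs are finite, simple and undirected. The $K_3$-degree of a vertex $v$ is the number of triangles of $G$ containing $v$. A graph $G$ has parameters $(r_2,r_3)$ if every vertex has degree $r_2$ and every vertex has $K_3$-degree $r_3$. *)

theory Defs
  imports Main
begin

definition simple_graph :: "'a set \<Rightarrow> ('a \<Rightarrow> 'a \<Rightarrow> bool) \<Rightarrow> bool" where
  "simple_graph V E \<longleftrightarrow> finite V \<and> (\<forall>x y. E x y \<longrightarrow> x \<in> V \<and> y \<in> V)
     \<and> (\<forall>x y. E x y \<longrightarrow> E y x) \<and> (\<forall>x. \<not> E x x)"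

definition degree :: "'a set \<Rightarrow> ('a \<Rightarrow> 'a \<Rightarrow> bool) \<Rightarrow> 'a \<Rightarrow> nat" where
  "degree V E v = card {u \<in> V. E v u}"

definition triangles_at :: "'a set \<Rightarrow> ('a \<Rightarrow> 'a \<Rightarrow> bool) \<Rightarrow> 'a \<Rightarrow> 'a set set" where
  "triangles_at V E v = {T. T \<subseteq> V \<and> card T = 3 \<and> v \<in> T \<and> (\<forall>x\<in>T. \<forall>y\<in>T. x \<noteq> y \<longrightarrow> E x y)}"

definition K3_degree :: "'a set \<Rightarrow> ('a \<Rightarrow> 'a \<Rightarrow> bool) \<Rightarrow> 'a \<Rightarrow> nat" where
  "K3_degree V E v = card (triangles_at V E v)"

definition has_parameters :: "'a set \<Rightarrow> ('a \<Rightarrow> 'a \<Rightarrow> bool) \<Rightarrow> nat \<Rightarrow> nat \<Rightarrow> bool" where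
  "has_parameters V E r2 r3 \<longleftrightarrow>
     (\<forall>v\<in>V. degree V E v = r2 \<and> K3_degree V E v = r3)"

end

theory Submission
  imports Defs
begin

text \<open>Let \<open>S(v)\<close> be the number of ordered pairs of distinct non-adjacent vertices in the
  neighbourhood \<open>N(v)\<close>. Triangles at \<open>v\<close> are edges inside \<open>N(v)\<close>, so
  \<open>S(v) + 2 r\<^sub>3 + r\<^sub>2 = r\<^sub>2\<^sup>2\<close>, i.e. \<open>S(v) = 2(r\<^sub>2 - 1) - 2c\<close> at every vertex. As
  \<open>2c < r\<^sub>2 - 2\<close> this exceeds \<open>r\<^sub>2\<close>, so some neighbour \<open>w\<close> of \<open>v\<close> has \<open>k \<ge> 2\<close>
  non-neighbours in \<open>N(v)\<close>. Let \<open>a = r\<^sub>2 - 1 - k\<close> be the number of common neighbours of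
  \<open>v\<close> and \<open>w\<close>. Splitting \<open>N(v)\<close> and \<open>N(w)\<close> along the edge \<open>vw\<close>, and using regularity to
  see that every common neighbour accounts for at least \<open>k\<close> non-adjacencies on each side,
  gives \<open>S(v) + S(w) \<ge> 4k + 2ak \<ge> 4(r\<^sub>2 - 1)\<close>, contradicting \<open>c > 0\<close>.\<close>

lemma two_mult_choose_two_int: "2 * int (m choose 2) = int m * (int m - 1)"
proof -
  have "even (m * (m - 1))" by (cases "even m") simp_all
  then have "int (2 * (m choose 2)) = int (m * (m - 1))" by (simp add: choose_two)
  then show ?thesis by (cases m) (simp_all add: algebra_simps)
qed

definition nbhd :: "'a set \<Rightarrow> ('a \<Rightarrow> 'a \<Rightarrow> bool) \<Rightarrow> 'a \<Rightarrow> 'a set" where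
  "nbhd V E v = {u \<in> V. E v u}"

text \<open>Pairs are ordered, so for \<open>S = T\<close> every non-edge inside \<open>S\<close> is counted twice.\<close>
definition nonadj :: "('a \<Rightarrow> 'a \<Rightarrow> bool) \<Rightarrow> 'a set \<Rightarrow> 'a set \<Rightarrow> nat" where
  "nonadj E S T = (\<Sum>a\<in>S. \<Sum>b\<in>T. of_bool (a \<noteq> b \<and> \<not> E a b))"

lemma card_nbhd: "card (nbhd V E v) = degree V E v"
  unfolding nbhd_def degree_def ..

lemma nonadj_Un_left:
  "finite S1 \<Longrightarrow> finite S2 \<Longrightarrow> S1 \<inter> S2 = {} \<Longrightarrow> nonadj E (S1 \<union> S2) T = nonadj E S1 T + nonadj E S2 T"
  unfolding nonadj_def by (rule sum.union_disjoint)

lemma nonadj_Un_right: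
  "finite T1 \<Longrightarrow> finite T2 \<Longrightarrow> T1 \<inter> T2 = {} \<Longrightarrow> nonadj E S (T1 \<union> T2) = nonadj E S T1 + nonadj E S T2"
  unfolding nonadj_def by (simp add: sum.union_disjoint sum.distrib del: sum_of_bool_eq)

lemma nonadj_commute:
  assumes "\<And>x y. E x y \<Longrightarrow> E y x"
  shows "nonadj E S T = nonadj E T S"
  unfolding nonadj_def
  by (subst sum.swap) (intro sum.cong refl arg_cong[where f = of_bool], use assms in blast)

lemma nonadj_mono_right: "finite T \<Longrightarrow> T' \<subseteq> T \<Longrightarrow> nonadj E S T' \<le> nonadj E S T"
  unfolding nonadj_def by (intro sum_mono sum_mono2) auto

lemma nonadj_eq_sum_singleton: "nonadj E S T = (\<Sum>z\<in>S. nonadj E {z} T)"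
  unfolding nonadj_def by simp

lemma nonadj_singleton: "finite T \<Longrightarrow> nonadj E {z} T = card {b \<in> T. z \<noteq> b \<and> \<not> E z b}"
  unfolding nonadj_def by (simp add: Int_def conj_commute)

context
  fixes V :: "'a set" and E :: "'a \<Rightarrow> 'a \<Rightarrow> bool"
  assumes graph: "simple_graph V E"
begin

lemma finite_vertices: "finite V"
  using graph unfolding simple_graph_def by blast

lemma adj_sym: "E x y \<Longrightarrow> E y x"
  using graph unfolding simple_graph_def by blast

lemma adj_irrefl: "\<not> E x x"
  using graph unfolding simple_graph_def by blast

lemma mem_nbhd_iff: "u \<in> nbhd V E v \<longleftrightarrow> E v u"
  using graph unfolding simple_graph_def nbhd_def by blast

lemma nbhd_sym: "u \<in> nbhd V E v \<Longrightarrow> v \<in> nbhd V E u"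
  unfolding mem_nbhd_iff by (blast intro: adj_sym)

lemma finite_nbhd: "finite (nbhd V E v)"
  unfolding nbhd_def using finite_vertices by simp

lemma nonadj_singleton_eq_card_Diff:
  "finite S \<Longrightarrow> nonadj E {u} S = card (S - nbhd V E u - {u})"
proof -
  have "{b \<in> S. u \<noteq> b \<and> \<not> E u b} = S - nbhd V E u - {u}" by (auto simp: mem_nbhd_iff)
  then show "finite S \<Longrightarrow> ?thesis" by (simp add: nonadj_singleton)
qed

lemma degree_eq_card_split:
  assumes "u \<in> nbhd V E v"
  shows "degree V E v = card (nbhd V E v \<inter> nbhd V E u) + card (nbhd V E v - nbhd V E u - {u}) + 1"
proof -
  define A where "A = nbhd V E v \<inter> nbhd V E u"
  define D where "D = nbhd V E v - nbhd V E u - {u}"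
  have "u \<notin> nbhd V E u" by (simp add: mem_nbhd_iff adj_irrefl)
  then have "u \<notin> A \<union> D" and "A \<inter> D = {}" unfolding A_def D_def by auto
  moreover have "finite A" "finite D" unfolding A_def D_def by (simp_all add: finite_nbhd)
  moreover have "nbhd V E v = insert u (A \<union> D)" using assms unfolding A_def D_def by blast
  ultimately show ?thesis
    unfolding card_nbhd[symmetric] A_def[symmetric] D_def[symmetric]
    by (simp add: card_Un_disjoint)
qed

lemma card_triangle: "E v u \<Longrightarrow> E v b \<Longrightarrow> E u b \<Longrightarrow> card {v, u, b} = 3"
  by (auto simp: card_insert_if dest: adj_sym intro: adj_irrefl[THEN notE])

lemma sum_card_common_nbhd:
  "(\<Sum>u\<in>nbhd V E v. card (nbhd V E v \<inter> nbhd V E u)) = 2 * K3_degree V E v"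
proof -
  let ?N = "nbhd V E v" and ?T = "triangles_at V E v"
  have "finite ?T"
    by (rule finite_subset[of _ "Pow V"]) (auto simp: triangles_at_def finite_vertices)
  moreover have "card {u \<in> ?N. u \<in> T} = 2" if "T \<in> ?T" for T
  proof -
    from that have "card T = 3" "v \<in> T" "T \<subseteq> V" "\<forall>x\<in>T. \<forall>y\<in>T. x \<noteq> y \<longrightarrow> E x y"
      unfolding triangles_at_def by blast+
    moreover from this have "{u \<in> ?N. u \<in> T} = T - {v}"
      by (auto simp: mem_nbhd_iff adj_irrefl)
    ultimately show ?thesis
      by (simp add: card_ge_0_finite)
  qed
  ultimately have "(\<Sum>u\<in>?N. card {T \<in> ?T. u \<in> T}) = 2 * card ?T"
    by (intro sum_multicount finite_nbhd) blast+
  moreover have "card {T \<in> ?T. u \<in> T} = card (?N \<inter> nbhd V E u)" if u: "u \<in> ?N" for u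
  proof -
    have "{T \<in> ?T. u \<in> T} = (\<lambda>b. {v, u, b}) ` (?N \<inter> nbhd V E u)"
    proof (intro equalityI subsetI)
      fix T assume "T \<in> {T \<in> ?T. u \<in> T}"
      then have T: "card T = 3" "v \<in> T" "u \<in> T" "T \<subseteq> V" "\<forall>x\<in>T. \<forall>y\<in>T. x \<noteq> y \<longrightarrow> E x y"
        unfolding triangles_at_def by blast+
      have "u \<noteq> v" using u by (auto simp: mem_nbhd_iff adj_irrefl)
      then have "card (T - {v, u}) = 1"
        using T by (simp add: card_ge_0_finite)
      then obtain b where b: "T - {v, u} = {b}" by (rule card_1_singletonE)
      then have "T = {v, u, b}" using T by blast
      moreover have "b \<in> T" "b \<noteq> v" "b \<noteq> u" using b by blast+
      then have "b \<in> ?N \<inter> nbhd V E u"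
        using T by (simp add: mem_nbhd_iff)
      ultimately show "T \<in> (\<lambda>b. {v, u, b}) ` (?N \<inter> nbhd V E u)" by blast
    next
      fix T assume "T \<in> (\<lambda>b. {v, u, b}) ` (?N \<inter> nbhd V E u)"
      then obtain b where "E v b" "E u b" "T = {v, u, b}"
        by (auto simp: mem_nbhd_iff)
      moreover have "E v u" using u by (simp add: mem_nbhd_iff)
      ultimately show "T \<in> {T \<in> ?T. u \<in> T}"
        using graph unfolding triangles_at_def simple_graph_def
        by (auto simp: card_triangle)
    qed
    moreover have "inj_on (\<lambda>b. {v, u, b}) (?N \<inter> nbhd V E u)"
    proof (rule inj_onI)
      fix x y assume "x \<in> ?N \<inter> nbhd V E u" and eq: "{v, u, x} = {v, u, y}"
      then have "x \<noteq> v" "x \<noteq> u" by (auto simp: mem_nbhd_iff adj_irrefl)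
      then show "x = y" using eq by blast
    qed
    ultimately show ?thesis by (simp add: card_image)
  qed
  ultimately show ?thesis
    unfolding K3_degree_def by (metis (no_types, lifting) sum.cong)
qed

lemma nonadj_nbhd_K3_degree:
  "nonadj E (nbhd V E v) (nbhd V E v) + 2 * K3_degree V E v + degree V E v = degree V E v ^ 2"
proof -
  let ?N = "nbhd V E v"
  have "nonadj E ?N ?N = (\<Sum>u\<in>?N. card (?N - nbhd V E u - {u}))"
    by (subst nonadj_eq_sum_singleton) (simp add: nonadj_singleton_eq_card_Diff finite_nbhd)
  then have "nonadj E ?N ?N + 2 * K3_degree V E v + degree V E v
      = (\<Sum>u\<in>?N. card (?N \<inter> nbhd V E u) + card (?N - nbhd V E u - {u}) + 1)"
    by (simp only: sum.distrib) (simp add: sum_card_common_nbhd card_nbhd)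
  also have "\<dots> = (\<Sum>u\<in>?N. degree V E v)"
    by (intro sum.cong refl) (simp add: degree_eq_card_split)
  finally show ?thesis by (simp add: card_nbhd power2_eq_square)
qed

lemma nonadj_nbhd_split_at_edge:
  assumes "w \<in> nbhd V E v"
  defines "A \<equiv> nbhd V E v \<inter> nbhd V E w" and "D \<equiv> nbhd V E v - nbhd V E w - {w}"
  shows "2 * card D + nonadj E A (nbhd V E v) + nonadj E A D \<le> nonadj E (nbhd V E v) (nbhd V E v)"
proof -
  let ?N = "nbhd V E v"
  have "w \<notin> nbhd V E w" by (simp add: mem_nbhd_iff adj_irrefl)
  then have N: "?N = {w} \<union> A \<union> D" and disj: "w \<notin> A" "w \<notin> D" "A \<inter> D = {}"
    using assms unfolding A_def D_def by auto
  have fin: "finite A" "finite D" unfolding A_def D_def by (simp_all add: finite_nbhd)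
  have "nonadj E ?N ?N = nonadj E ({w} \<union> A) ?N + nonadj E D ?N"
    by (subst (1) N) (rule nonadj_Un_left; simp add: fin disj)
  also have "nonadj E ({w} \<union> A) ?N = nonadj E {w} ?N + nonadj E A ?N"
    by (rule nonadj_Un_left) (simp_all add: fin disj)
  also have "nonadj E {w} ?N = card D"
    unfolding D_def by (simp add: nonadj_singleton_eq_card_Diff finite_nbhd)
  finally have split: "nonadj E ?N ?N = card D + nonadj E A ?N + nonadj E D ?N" .
  have "D - nbhd V E w - {w} = D" unfolding D_def by blast
  then have "nonadj E {w} D = card D" by (simp add: nonadj_singleton_eq_card_Diff fin)
  then have "card D + nonadj E A D = nonadj E D {w} + nonadj E D A"
    by (simp add: nonadj_commute[OF adj_sym, where S = D])
  also have "\<dots> = nonadj E D ({w} \<union> A)"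
    by (rule nonadj_Un_right[symmetric]) (simp_all add: fin disj)
  also have "\<dots> \<le> nonadj E D ?N"
    by (rule nonadj_mono_right) (use N fin in auto)
  finally show ?thesis using split by linarith
qed

lemma ex_two_nonadj_in_nbhd:
  assumes "degree V E v < nonadj E (nbhd V E v) (nbhd V E v)"
  shows "\<exists>w\<in>nbhd V E v. 2 \<le> card (nbhd V E v - nbhd V E w - {w})"
proof (rule ccontr)
  let ?N = "nbhd V E v"
  assume "\<not> ?thesis"
  then have "nonadj E {w} ?N \<le> 1" if "w \<in> ?N" for w
    using that by (auto simp: nonadj_singleton_eq_card_Diff finite_nbhd not_le)
  then have "(\<Sum>w\<in>?N. nonadj E {w} ?N) \<le> (\<Sum>w\<in>?N. 1)"
    by (rule sum_mono)
  with assms show False by (simp add: card_nbhd flip: nonadj_eq_sum_singleton)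
qed

lemma card_nbhd_Diff_swap:
  assumes "u \<in> nbhd V E v" and "degree V E u = degree V E v"
  shows "card (nbhd V E u - nbhd V E v - {v}) = card (nbhd V E v - nbhd V E u - {u})"
proof -
  have "v \<in> nbhd V E u" using assms(1) by (rule nbhd_sym)
  then show ?thesis
    using degree_eq_card_split[OF assms(1)] degree_eq_card_split[of v u] assms(2)
    by (simp add: Int_commute)
qed

context
  fixes r :: nat
  assumes regular: "\<And>u. u \<in> V \<Longrightarrow> degree V E u = r"
begin

text \<open>A common neighbour \<open>z\<close> of \<open>v\<close> and \<open>w\<close> either misses a vertex of \<open>B\<close> or sees it
  outside \<open>N(v) \<union> {v}\<close>; by regularity, \<open>z\<close> has exactly as many neighbours there as it has
  non-neighbours in \<open>N(v)\<close>.\<close>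
lemma card_mult_le_nonadj:
  assumes "w \<in> nbhd V E v"
  defines "A \<equiv> nbhd V E v \<inter> nbhd V E w" and "B \<equiv> nbhd V E w - nbhd V E v - {v}"
  shows "card A * card B \<le> nonadj E A (nbhd V E v) + nonadj E A B"
proof -
  have "card B \<le> nonadj E {z} (nbhd V E v) + nonadj E {z} B" if "z \<in> A" for z
  proof -
    have z: "z \<in> nbhd V E v" using that unfolding A_def by blast
    moreover have "v \<in> nbhd V E z" using z by (rule nbhd_sym)
    ultimately have "degree V E z = degree V E v"
      by (simp add: nbhd_def regular)
    then have "card (nbhd V E z - nbhd V E v - {v}) = nonadj E {z} (nbhd V E v)"
      by (simp add: card_nbhd_Diff_swap[OF z] nonadj_singleton_eq_card_Diff finite_nbhd)
    moreover have "card (B \<inter> nbhd V E z) \<le> card (nbhd V E z - nbhd V E v - {v})"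
      by (rule card_mono) (auto simp: finite_nbhd B_def)
    moreover have "B - nbhd V E z - {z} = B - nbhd V E z"
      using z unfolding B_def by blast
    then have "card (B - nbhd V E z) = nonadj E {z} B"
      by (simp add: nonadj_singleton_eq_card_Diff finite_nbhd B_def)
    moreover have "card B = card (B \<inter> nbhd V E z) + card (B - nbhd V E z)"
      by (rule card_Int_Diff) (simp add: finite_nbhd B_def)
    ultimately show ?thesis by linarith
  qed
  then have "(\<Sum>z\<in>A. card B) \<le> (\<Sum>z\<in>A. nonadj E {z} (nbhd V E v) + nonadj E {z} B)"
    by (rule sum_mono)
  then show ?thesis by (simp add: sum.distrib flip: nonadj_eq_sum_singleton)
qed

lemma nonadj_nbhds_lower_bound:
  assumes vw: "w \<in> nbhd V E v" and many: "2 \<le> card (nbhd V E v - nbhd V E w - {w})"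
  shows "4 * (r - 1) \<le> nonadj E (nbhd V E v) (nbhd V E v) + nonadj E (nbhd V E w) (nbhd V E w)"
proof -
  define A where "A = nbhd V E v \<inter> nbhd V E w"
  define D where "D = nbhd V E v - nbhd V E w - {w}"
  define B where "B = nbhd V E w - nbhd V E v - {v}"
  have wv: "v \<in> nbhd V E w" using vw by (rule nbhd_sym)
  then have "v \<in> V" "w \<in> V" using vw by (simp_all add: nbhd_def)
  then have "card B = card D"
    unfolding B_def D_def by (simp add: card_nbhd_Diff_swap[OF vw] regular)
  have "card A + card D + 1 = r"
    using degree_eq_card_split[OF vw] regular[OF \<open>v \<in> V\<close>] unfolding A_def D_def by simp
  have "2 * card D + nonadj E A (nbhd V E v) + nonadj E A D \<le> nonadj E (nbhd V E v) (nbhd V E v)"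
    using nonadj_nbhd_split_at_edge[OF vw] unfolding A_def D_def .
  moreover have "2 * card B + nonadj E A (nbhd V E w) + nonadj E A B \<le> nonadj E (nbhd V E w) (nbhd V E w)"
    using nonadj_nbhd_split_at_edge[OF wv] unfolding A_def B_def by (simp add: Int_commute)
  moreover have "card A * card D \<le> nonadj E A (nbhd V E v) + nonadj E A B"
    using card_mult_le_nonadj[OF vw] \<open>card B = card D\<close> unfolding A_def B_def by simp
  moreover have "card A * card D \<le> nonadj E A (nbhd V E w) + nonadj E A D"
    using card_mult_le_nonadj[OF wv] unfolding A_def D_def by (simp add: Int_commute)
  moreover have "2 * card A \<le> card A * card D"
    using many unfolding D_def by simp
  ultimately show ?thesis
    using \<open>card B = card D\<close> \<open>card A + card D + 1 = r\<close> by linarith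
qed

end

end

theorem proposition3p5:
  fixes V :: "'a set" and E :: "'a \<Rightarrow> 'a \<Rightarrow> bool"
    and r2 r3 :: nat and c :: int
  assumes "r2 > 4"
    and "0 < c" and "2 * c < int r2 - 2"
    and "int r3 = int ((r2 - 1) choose 2) + c"
  shows "\<not> (simple_graph V E \<and> V \<noteq> {} \<and> has_parameters V E r2 r3)"
proof
  assume H: "simple_graph V E \<and> V \<noteq> {} \<and> has_parameters V E r2 r3"
  then have graph: "simple_graph V E" and "V \<noteq> {}" by simp_all
  have degree: "degree V E u = r2" and K3: "K3_degree V E u = r3" if "u \<in> V" for u
    using H that unfolding has_parameters_def by simp_all
  let ?S = "\<lambda>u. nonadj E (nbhd V E u) (nbhd V E u)"
  have r3: "2 * int r3 = (int r2 - 1) * (int r2 - 2) + 2 * c"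
    using assms(1,4) two_mult_choose_two_int[of "r2 - 1"] by (simp add: of_nat_diff)
  have S: "int (?S u) = 2 * (int r2 - 1) - 2 * c" if "u \<in> V" for u
  proof -
    have "?S u + 2 * r3 + r2 = r2 ^ 2"
      using nonadj_nbhd_K3_degree[OF graph, of u] degree[OF that] K3[OF that] by simp
    then have "int (?S u + 2 * r3 + r2) = int (r2 ^ 2)" by (rule arg_cong)
    then show ?thesis using r3 by (simp add: power2_eq_square algebra_simps)
  qed
  obtain v where v: "v \<in> V" using \<open>V \<noteq> {}\<close> by blast
  have "int r2 < int (?S v)" using S[OF v] assms(3) by arith
  then obtain w where w: "w \<in> nbhd V E v" and "2 \<le> card (nbhd V E v - nbhd V E w - {w})"
    using ex_two_nonadj_in_nbhd[OF graph] degree[OF v] by auto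
  then have "4 * (r2 - 1) \<le> ?S v + ?S w"
    using nonadj_nbhds_lower_bound[OF graph, of r2] degree by blast
  then have "int (4 * (r2 - 1)) \<le> int (?S v) + int (?S w)" by linarith
  moreover have "w \<in> V" using w by (simp add: nbhd_def)
  ultimately show False
    using S[OF v] S[OF \<open>w \<in> V\<close>] assms(1,2) by (simp add: of_nat_diff)
qed

end
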